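(* Let $x:[p]\to[r]$ be a strictly increasing set map. Then there exists a unique decomposition of $x$ as $[p]\xrightarrow{\mu}[p']\xrightarrow{\phi}[q]\xrightarrow{\psi}[r]$ such that $\phi$ is non-twisted, $\psi\in\square$, and $\mu=(g_1,\dots,g_{p'})$ where the $g_i:[p]\to[1]$ are non-constant and mutually distinct (i.e. $g_i=g_j$ implies $i=j$). Moreover $p\le p'$, $\mu$ is strictly increasing, and $\mu$ is adjacency-preserving if and only if $p=p'$.
   Context: $[0]=\{()\}$, $[n]=\{0,1\}^n$ ($n\ge1$) with the product order. Face maps $\delta_i^\alpha:[n-1]\to[n]$ insert $\alpha\in\{0,1\}$ at position $i$; $\square$ is the category with objects $[n]$, $n\ge0$, generated by the face maps. A map is adjacency-preserving if strictly increasing and it sends pairs at Hamming distance $1$ to pairs at Hamming distance $1$. A map $\phi:[p']\to[q]$ is non-twisted if it is of the form $(\epsilon_1,\dots,\epsilon_{p'})\mapsto(\epsilon_{i_1},\dots,\epsilon_{i_q})$ with $\{1,\dots,p'\}\subset\{i_1,\dots,i_q\}$ and such that, reading from left to right, the first appearance of $\epsilon_i$ is before the first appearance of $\epsilon_{i+1}$ for every $i$. A map $[p]\to[p']$ is written $(g_1,\dots,g_{p'})$ in terms of its coordinate functions $g_i:[p]\to[1]=\{0,1\}$. *)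

theory Defs
  imports Main
begin

text \<open>Vertices of the cube [n] = {0,1}^n are boolean lists of length n
  (False = 0, True = 1); [0] = {[]}. Maps [p] -> [q] are functions on boolean
  lists, considered only on the carrier cube p.\<close>

definition cube :: "nat \<Rightarrow> bool list set" where
  "cube n = {xs. length xs = n}"

definition cube_le :: "bool list \<Rightarrow> bool list \<Rightarrow> bool" where
  "cube_le a b \<longleftrightarrow> length a = length b \<and> (\<forall>i<length a. a ! i \<longrightarrow> b ! i)"

definition cube_less :: "bool list \<Rightarrow> bool list \<Rightarrow> bool" where
  "cube_less a b \<longleftrightarrow> cube_le a b \<and> a \<noteq> b"

definition strictly_increasing :: "nat \<Rightarrow> (bool list \<Rightarrow> bool list) \<Rightarrow> bool" where
  "strictly_increasing p f \<longleftrightarrow>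
     (\<forall>a\<in>cube p. \<forall>b\<in>cube p. cube_less a b \<longrightarrow> cube_less (f a) (f b))"

definition hamming :: "bool list \<Rightarrow> bool list \<Rightarrow> nat" where
  "hamming a b = card {i. i < length a \<and> a ! i \<noteq> b ! i}"

definition adjacency_preserving :: "nat \<Rightarrow> (bool list \<Rightarrow> bool list) \<Rightarrow> bool" where
  "adjacency_preserving p f \<longleftrightarrow> strictly_increasing p f \<and>
     (\<forall>a\<in>cube p. \<forall>b\<in>cube p. hamming a b = 1 \<longrightarrow> hamming (f a) (f b) = 1)"

text \<open>Face map: insert \<alpha> at (0-based) position i, i.e. the paper's \<delta>_{i+1}^\<alpha>.\<close>
definition face :: "nat \<Rightarrow> bool \<Rightarrow> bool list \<Rightarrow> bool list" where
  "face i \<alpha> xs = take i xs @ \<alpha> # drop i xs"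

inductive cube_map :: "nat \<Rightarrow> nat \<Rightarrow> (bool list \<Rightarrow> bool list) \<Rightarrow> bool" where
  cube_map_id: "cube_map n n id"
| cube_map_face: "cube_map m n f \<Longrightarrow> i \<le> n \<Longrightarrow> cube_map m (Suc n) (face i \<alpha> \<circ> f)"

definition in_square :: "nat \<Rightarrow> nat \<Rightarrow> (bool list \<Rightarrow> bool list) \<Rightarrow> bool" where
  "in_square q r \<psi> \<longleftrightarrow> (\<exists>g. cube_map q r g \<and> (\<forall>a\<in>cube q. \<psi> a = g a))"

text \<open>Non-twisted maps [p'] -> [q]: (e_0,...,e_{p'-1}) |-> (e_{i_1},...,e_{i_q}) (0-based
  indices), every index occurring, and the first occurrence of i before that of i+1.\<close>
definition non_twisted :: "nat \<Rightarrow> nat \<Rightarrow> (bool list \<Rightarrow> bool list) \<Rightarrow> bool" where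
  "non_twisted p' q \<phi> \<longleftrightarrow> (\<exists>is :: nat list.
      length is = q \<and> set is = {..<p'} \<and>
      (\<forall>i. Suc i < p' \<longrightarrow> (\<forall>k<q. is ! k = Suc i \<longrightarrow> (\<exists>k'<k. is ! k' = i))) \<and>
      (\<forall>a\<in>cube p'. \<phi> a = map (\<lambda>j. a ! j) is))"

definition distinct_nonconst_coords :: "nat \<Rightarrow> nat \<Rightarrow> (bool list \<Rightarrow> bool list) \<Rightarrow> bool" where
  "distinct_nonconst_coords p p' \<mu> \<longleftrightarrow> (\<exists>g :: nat \<Rightarrow> bool list \<Rightarrow> bool.
      (\<forall>a\<in>cube p. \<mu> a = map (\<lambda>i. g i a) [0..<p']) \<and>
      (\<forall>i<p'. \<exists>a\<in>cube p. \<exists>b\<in>cube p. g i a \<noteq> g i b) \<and>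
      (\<forall>i<p'. \<forall>j<p'. (\<forall>a\<in>cube p. g i a = g j a) \<longrightarrow> i = j))"

definition is_decomposition ::
  "nat \<Rightarrow> nat \<Rightarrow> (bool list \<Rightarrow> bool list) \<Rightarrow> nat \<Rightarrow> nat \<Rightarrow>
   (bool list \<Rightarrow> bool list) \<Rightarrow> (bool list \<Rightarrow> bool list) \<Rightarrow> (bool list \<Rightarrow> bool list) \<Rightarrow> bool" where
  "is_decomposition p r x p' q \<mu> \<phi> \<psi> \<longleftrightarrow>
     distinct_nonconst_coords p p' \<mu> \<and> non_twisted p' q \<phi> \<and> in_square q r \<psi> \<and>
     (\<forall>a\<in>cube p. x a = \<psi> (\<phi> (\<mu> a)))"

end

theory Submission
  imports Defs "HOL-Library.FuncSet"
begin

text \<open>The coordinates of \<open>x\<close> are monotone Boolean functions on \<open>[p]\<close>. The constant ones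
  are inserted by \<open>\<psi> \<in> \<square>\<close>; the non-constant ones, listed without repetition in order of first
  appearance, are the coordinates \<open>g\<^sub>i\<close> of \<open>\<mu>\<close>, and \<open>\<phi>\<close> records which \<open>g\<^sub>i\<close> occupies each
  remaining position. Listing in order of first appearance is exactly the non-twisted condition.
  Uniqueness holds because a composite \<open>\<psi> \<circ> \<phi> \<circ> \<mu>\<close> determines which of its coordinates are
  constant, and a non-twisted index list is determined by which of its entries coincide.
  Finally \<open>\<mu>\<close> is strictly increasing and sends \<open>0\<close> to \<open>0\<close> and \<open>1\<close> to \<open>1\<close>, its coordinates
  being monotone and non-constant; counting weights along a maximal chain of \<open>[p]\<close> then gives
  \<open>p \<le> p'\<close>, with equality exactly when \<open>\<mu>\<close> preserves adjacency.\<close>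

section \<open>Weights and maximal chains\<close>

definition support :: "bool list \<Rightarrow> nat set" where
  "support u = {i. i < length u \<and> u ! i}"

definition weight :: "bool list \<Rightarrow> nat" where
  "weight u = card (support u)"

lemma support_subset: "support u \<subseteq> {..<length u}"
  by (auto simp: support_def)

lemma finite_support [simp]: "finite (support u)"
  using support_subset finite_subset by blast

lemma weight_le_length: "weight u \<le> length u"
  unfolding weight_def by (metis support_subset card_lessThan card_mono finite_lessThan)

lemma weight_replicate [simp]:
  "weight (replicate n True) = n" "weight (replicate n False) = 0"
proof -
  have "support (replicate n True) = {..<n}" "support (replicate n False) = {}"
    by (auto simp: support_def)
  then show "weight (replicate n True) = n" "weight (replicate n False) = 0"
    by (simp_all add: weight_def)
qed

lemma cube_le_refl: "cube_le u u"
  by (simp add: cube_le_def)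

lemma support_mono: "cube_le u v \<Longrightarrow> support u \<subseteq> support v"
  by (auto simp: cube_le_def support_def)

lemma cube_le_iff_support:
  "length u = length v \<Longrightarrow> cube_le u v \<longleftrightarrow> support u \<subseteq> support v"
  by (auto simp: cube_le_def support_def)

lemma support_inject: "length u = length v \<Longrightarrow> support u = support v \<Longrightarrow> u = v"
  by (rule nth_equalityI) (auto simp: support_def set_eq_iff)

lemma weight_mono: "cube_le u v \<Longrightarrow> weight u \<le> weight v"
  unfolding weight_def by (simp add: support_mono card_mono)

lemma weight_strict_mono: "cube_less u v \<Longrightarrow> weight u < weight v"
proof -
  assume "cube_less u v"
  then have "length u = length v" "support u \<subseteq> support v" "u \<noteq> v"
    by (auto simp: cube_less_def support_mono) (simp add: cube_le_def)
  then have "support u \<subset> support v" using support_inject by blast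
  then show ?thesis unfolding weight_def by (simp add: psubset_card_mono)
qed

lemma hamming_commute: "length u = length v \<Longrightarrow> hamming u v = hamming v u"
  unfolding hamming_def by metis

lemma hamming_cube_le: "cube_le u v \<Longrightarrow> hamming u v = weight v - weight u"
proof -
  assume le: "cube_le u v"
  then have "{i. i < length u \<and> u ! i \<noteq> v ! i} = support v - support u"
    by (auto simp: support_def cube_le_def)
  moreover have "support u \<subseteq> support v" using le by (rule support_mono)
  ultimately show ?thesis unfolding hamming_def weight_def by (simp add: card_Diff_subset)
qed

lemma weight_le_hamming: "length u = length v \<Longrightarrow> weight v \<le> weight u + hamming u v"
proof -
  assume "length u = length v"
  then have "support v \<subseteq> support u \<union> {i. i < length u \<and> u ! i \<noteq> v ! i}"
    by (auto simp: support_def)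
  then have "weight v \<le> card (support u \<union> {i. i < length u \<and> u ! i \<noteq> v ! i})"
    unfolding weight_def by (simp add: card_mono)
  also have "\<dots> \<le> weight u + hamming u v"
    unfolding weight_def hamming_def by (rule card_Un_le)
  finally show ?thesis .
qed

lemma hamming_one_cases:
  assumes "length u = length v" "hamming u v = 1"
  shows "cube_less u v \<or> cube_less v u"
proof -
  obtain i where i: "{j. j < length u \<and> u ! j \<noteq> v ! j} = {i}"
    using assms(2) unfolding hamming_def by (auto simp: card_Suc_eq)
  then have diff: "i < length u" "u ! i \<noteq> v ! i"
    and same: "\<And>j. j < length u \<Longrightarrow> j \<noteq> i \<Longrightarrow> u ! j = v ! j"
    by blast+
  then have "u \<noteq> v" by auto
  moreover have "cube_le u v \<or> cube_le v u"
    using diff same assms(1) unfolding cube_le_def by (cases "u ! i") auto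
  ultimately show ?thesis by (auto simp: cube_less_def)
qed

lemma update_True_cover:
  assumes "i < length c" "\<not> c ! i"
  shows "cube_less c (c[i := True])" "weight (c[i := True]) = Suc (weight c)"
    "hamming c (c[i := True]) = 1"
proof -
  have supp: "support (c[i := True]) = insert i (support c)" "i \<notin> support c"
    using assms by (auto simp: support_def nth_list_update)
  have "c[i := True] \<noteq> c" using assms by (metis nth_list_update_eq)
  then show "cube_less c (c[i := True])"
    using supp by (auto simp: cube_less_def cube_le_iff_support)
  then show "weight (c[i := True]) = Suc (weight c)"
    unfolding weight_def supp using supp(2) by simp
  have "{j. j < length c \<and> c ! j \<noteq> c[i := True] ! j} = {i}"
    using assms by (auto simp: nth_list_update)
  then show "hamming c (c[i := True]) = 1" by (simp add: hamming_def)
qed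

lemma cube_le_induct [consumes 1, case_names refl step]:
  assumes "cube_le a b" and "P a"
    and step: "\<And>c i. cube_le a c \<Longrightarrow> cube_le c b \<Longrightarrow> i < length c \<Longrightarrow> \<not> c ! i \<Longrightarrow>
      P c \<Longrightarrow> P (c[i := True])"
  shows "P b"
proof -
  have "cube_le a c \<Longrightarrow> cube_le c b \<Longrightarrow> P c \<Longrightarrow> P b" for c
  proof (induction "weight b - weight c" arbitrary: c rule: less_induct)
    case less
    show ?case
    proof (cases "c = b")
      case True
      then show ?thesis using less.prems by simp
    next
      case False
      have len: "length c = length b" using less.prems(2) by (simp add: cube_le_def)
      then have "support c \<subset> support b"
        using less.prems(2) False support_inject by (auto simp: cube_le_iff_support)
      then obtain i where i: "i \<in> support b" "i \<notin> support c" by blast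
      then have ic: "i < length c" "\<not> c ! i" using len by (auto simp: support_def)
      have "cube_le (c[i := True]) b"
        using less.prems(2) i len by (auto simp: cube_le_def nth_list_update support_def)
      moreover have "cube_le a (c[i := True])"
        using less.prems(1) update_True_cover(1)[OF ic] by (auto simp: cube_le_def cube_less_def)
      moreover have "weight b - weight (c[i := True]) < weight b - weight c"
        using update_True_cover(2)[OF ic] weight_mono[OF calculation(1)] by simp
      ultimately show ?thesis using less step[OF less.prems(1,2) ic less.prems(3)] by blast
    qed
  qed
  then show ?thesis using assms(1,2) cube_le_refl by blast
qed

section \<open>Strictly increasing maps preserving \<open>0\<close> and \<open>1\<close>\<close>

locale strict_endpoint_map =
  fixes p n :: nat and \<mu> :: "bool list \<Rightarrow> bool list"
  assumes maps_cube: "\<And>a. a \<in> cube p \<Longrightarrow> \<mu> a \<in> cube n"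
    and strict: "strictly_increasing p \<mu>"
    and map_bottom: "\<mu> (replicate p False) = replicate n False"
    and map_top: "\<mu> (replicate p True) = replicate n True"
begin

lemma weight_gap:
  assumes "cube_le a b" "a \<in> cube p"
  shows "weight (\<mu> a) + (weight b - weight a) \<le> weight (\<mu> b)"
  using assms(1)
proof (induction rule: cube_le_induct)
  case refl
  then show ?case by simp
next
  case (step c i)
  have "c \<in> cube p" using step.hyps(1) assms(2) by (simp add: cube_def cube_le_def)
  moreover have "c[i := True] \<in> cube p" using calculation by (simp add: cube_def)
  ultimately have "weight (\<mu> c) < weight (\<mu> (c[i := True]))"
    using strict update_True_cover(1)[OF step.hyps(3,4)] weight_strict_mono
    unfolding strictly_increasing_def by blast
  then show ?case
    using step.IH update_True_cover(2)[OF step.hyps(3,4)] weight_mono[OF step.hyps(1)] by linarith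
qed

lemma weight_gap_adjacency_preserving:
  assumes "adjacency_preserving p \<mu>" "cube_le a b" "a \<in> cube p"
  shows "weight (\<mu> b) \<le> weight (\<mu> a) + (weight b - weight a)"
  using assms(2)
proof (induction rule: cube_le_induct)
  case refl
  then show ?case by simp
next
  case (step c i)
  have c: "c \<in> cube p" using step.hyps(1) assms(3) by (simp add: cube_def cube_le_def)
  moreover have c': "c[i := True] \<in> cube p" using c by (simp add: cube_def)
  ultimately have "hamming (\<mu> c) (\<mu> (c[i := True])) = 1"
    using assms(1) update_True_cover(3)[OF step.hyps(3,4)] unfolding adjacency_preserving_def by blast
  moreover have "length (\<mu> c) = length (\<mu> (c[i := True]))"
    using maps_cube[OF c] maps_cube[OF c'] by (simp add: cube_def)
  ultimately have "weight (\<mu> (c[i := True])) \<le> weight (\<mu> c) + 1"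
    using weight_le_hamming[of "\<mu> c" "\<mu> (c[i := True])"] by simp
  then show ?case
    using step.IH update_True_cover(2)[OF step.hyps(3,4)] weight_mono[OF step.hyps(1)] by linarith
qed

lemma dim_le: "p \<le> n"
  using weight_gap[of "replicate p False" "replicate p True"]
  by (simp add: cube_def cube_le_def map_bottom map_top)

lemma adjacency_preserving_iff: "adjacency_preserving p \<mu> \<longleftrightarrow> p = n"
proof
  assume "adjacency_preserving p \<mu>"
  then have "n \<le> p"
    using weight_gap_adjacency_preserving[of "replicate p False" "replicate p True"]
    by (simp add: cube_def cube_le_def map_bottom map_top)
  then show "p = n" using dim_le by simp
next
  assume pn: "p = n"
  have step: "hamming (\<mu> a) (\<mu> b) = 1"
    if ab: "a \<in> cube p" "b \<in> cube p" "cube_less a b" "hamming a b = 1" for a b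
  proof -
    have le: "cube_le a b" using ab(3) by (simp add: cube_less_def)
    have "weight b = Suc (weight a)"
      using hamming_cube_le[OF le] ab(4) weight_strict_mono[OF ab(3)] by simp
    moreover have "weight a \<le> weight (\<mu> a)"
      using weight_gap[of "replicate p False" a] ab(1) map_bottom
      by (simp add: cube_def cube_le_def)
    moreover have "weight (\<mu> b) + (p - weight b) \<le> n"
      using weight_gap[of b "replicate p True"] ab(2) map_top
      by (simp add: cube_def cube_le_def)
    moreover have "weight b \<le> p" using weight_le_length[of b] ab(2) by (simp add: cube_def)
    moreover have "cube_less (\<mu> a) (\<mu> b)" using strict ab unfolding strictly_increasing_def by blast
    ultimately show ?thesis
      using pn hamming_cube_le[of "\<mu> a" "\<mu> b"] weight_strict_mono[of "\<mu> a" "\<mu> b"]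
      by (simp add: cube_less_def)
  qed
  show "adjacency_preserving p \<mu>"
    unfolding adjacency_preserving_def
  proof (intro conjI strict ballI impI)
    fix a b assume ab: "a \<in> cube p" "b \<in> cube p" "hamming a b = 1"
    have "length a = length b" "length (\<mu> a) = length (\<mu> b)"
      using ab maps_cube by (auto simp: cube_def)
    then show "hamming (\<mu> a) (\<mu> b) = 1"
      using hamming_one_cases[of a b] step[of a b] step[of b a] ab hamming_commute by auto
  qed
qed

end

section \<open>The morphisms of \<open>\<square>\<close>\<close>

text \<open>Slot lists encode the morphisms of \<open>\<square>\<close>: a composite of face maps inserts the
  constants \<open>Some b\<close> and leaves its argument in the \<open>None\<close> slots.\<close>

fun fill :: "'a option list \<Rightarrow> 'a list \<Rightarrow> 'a list" where
  "fill [] xs = []"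
| "fill (None # s) xs = hd xs # fill s (tl xs)"
| "fill (Some y # s) xs = y # fill s xs"

lemma length_fill [simp]: "length (fill s xs) = length s"
  by (induction s xs rule: fill.induct) auto

lemma fill_replicate_None: "length xs = n \<Longrightarrow> fill (replicate n None) xs = xs"
  by (induction n arbitrary: xs) (auto simp: length_Suc_conv)

lemma face_fill:
  "i \<le> length s \<Longrightarrow> face i \<alpha> (fill s xs) = fill (take i s @ Some \<alpha> # drop i s) xs"
proof (induction s arbitrary: i xs)
  case Nil
  then show ?case by (simp add: face_def)
next
  case (Cons y s)
  then show ?case by (cases i; cases y) (auto simp: face_def)
qed

lemma map_fill:
  "count_list s None \<le> length xs \<Longrightarrow> map h (fill s xs) = fill (map (map_option h) s) (map h xs)"
  by (induction s xs rule: fill.induct) (auto simp: Suc_le_length_iff)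

lemma set_fill:
  "count_list s None \<le> length xs \<Longrightarrow> set (fill s xs) \<subseteq> {y. Some y \<in> set s} \<union> set xs"
  by (induction s xs rule: fill.induct) (auto simp: Suc_le_length_iff)

lemma count_None_filter:
  "count_list (map (\<lambda>y. if P y then None else Some (h y)) ys) None = length (filter P ys)"
  by (induction ys) auto

lemma fill_inject:
  assumes "fill s xs = fill s' xs'"
    and "count_list s None = length xs" "count_list s' None = length xs'"
    and "\<And>y. Some y \<in> set s \<Longrightarrow> \<not> P y" "\<And>y. Some y \<in> set s' \<Longrightarrow> \<not> P y"
    and "\<forall>y\<in>set xs. P y" "\<forall>y\<in>set xs'. P y"
  shows "s = s' \<and> xs = xs'"
  using assms
proof (induction s xs arbitrary: s' xs' rule: fill.induct)
  case (1 xs)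
  then show ?case by (metis length_0_conv length_fill count_list.simps(1))
next
  case (2 s xs)
  obtain y xs0 where xs: "xs = y # xs0" using "2.prems"(2) by (cases xs) auto
  show ?case
  proof (cases s')
    case Nil
    then show ?thesis using "2.prems"(1) by simp
  next
    case (Cons o' t)
    show ?thesis
    proof (cases o')
      case None
      obtain y' xs0' where xs': "xs' = y' # xs0'" using "2.prems"(3) Cons None by (cases xs') auto
      show ?thesis using "2.IH"[of t xs0'] "2.prems" Cons None xs xs' by auto
    next
      case (Some b)
      then show ?thesis using "2.prems" Cons xs by auto
    qed
  qed
next
  case (3 y s xs)
  show ?case
  proof (cases s')
    case Nil
    then show ?thesis using "3.prems"(1) by simp
  next
    case (Cons o' t)
    show ?thesis
    proof (cases o')
      case None
      obtain y' xs0' where xs': "xs' = y' # xs0'" using "3.prems"(3) Cons None by (cases xs') auto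
      show ?thesis using "3.prems" Cons None xs' by auto
    next
      case (Some b)
      then show ?thesis using "3.IH"[of t xs'] "3.prems" Cons by auto
    qed
  qed
qed

lemma cube_map_imp_fill:
  "cube_map m n f \<Longrightarrow> \<exists>s. length s = n \<and> count_list s None = m \<and> (\<forall>a\<in>cube m. f a = fill s a)"
proof (induction rule: cube_map.induct)
  case (cube_map_id n)
  show ?case
    by (rule exI[of _ "replicate n None"]) (simp add: cube_def fill_replicate_None count_list_eq_length_filter)
next
  case (cube_map_face m n f i \<alpha>)
  then obtain s where s: "length s = n" "count_list s None = m" "\<forall>a\<in>cube m. f a = fill s a"
    by blast
  have "count_list (take i s @ Some \<alpha> # drop i s) None = count_list s None"
    by (metis append_take_drop_id count_list_append count_list.simps(2) option.distinct(1))
  then show ?case using s cube_map_face.hyps(2)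
    by (intro exI[of _ "take i s @ Some \<alpha> # drop i s"]) (simp add: face_fill)
qed

lemma fill_imp_cube_map:
  "\<exists>g. cube_map (count_list s None) (length s) g \<and> (\<forall>a\<in>cube (count_list s None). g a = fill s a)"
proof (induction "length s" arbitrary: s)
  case 0
  then show ?case using cube_map_id[of 0] by (auto simp: cube_def)
next
  case (Suc n)
  show ?case
  proof (cases "\<forall>y\<in>set s. y = None")
    case True
    then have s: "s = replicate (length s) None" by (simp add: replicate_length_same)
    have "count_list s None = length s"
      using True by (simp add: count_list_eq_length_filter filter_id_conv eq_commute[of None])
    moreover have "\<forall>a\<in>cube (length s). id a = fill s a"
      using fill_replicate_None[of _ "length s"] s by (metis cube_def id_apply mem_Collect_eq)
    ultimately show ?thesis using cube_map_id[of "length s"] by metis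
  next
    case False
    then obtain i \<alpha> where i: "i < length s" "s ! i = Some \<alpha>"
      by (metis in_set_conv_nth not_None_eq)
    define s0 where "s0 = take i s @ drop (Suc i) s"
    have s: "s = take i s0 @ Some \<alpha> # drop i s0"
      using i id_take_nth_drop[OF i(1)] by (simp add: s0_def)
    have len: "length s0 = n" "i \<le> length s0" using Suc.hyps(2) i(1) by (simp_all add: s0_def)
    have cnt: "count_list s None = count_list s0 None"
      by (subst s) (metis append_take_drop_id count_list_append count_list.simps(2) option.distinct(1))
    obtain g where g: "cube_map (count_list s0 None) n g"
      "\<forall>a\<in>cube (count_list s0 None). g a = fill s0 a"
      using Suc.hyps(1)[OF len(1)[symmetric]] len(1) by metis
    have "cube_map (count_list s None) (length s) (face i \<alpha> \<circ> g)"
      using cube_map_face[OF g(1), of i \<alpha>] len Suc.hyps(2) cnt by simp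
    moreover have "\<forall>a\<in>cube (count_list s None). (face i \<alpha> \<circ> g) a = fill s a"
      using g(2) face_fill[OF len(2)] cnt s by simp
    ultimately show ?thesis by blast
  qed
qed

lemma in_square_iff_fill:
  "in_square q r \<psi> \<longleftrightarrow> (\<exists>s. length s = r \<and> count_list s None = q \<and> (\<forall>a\<in>cube q. \<psi> a = fill s a))"
proof
  assume "in_square q r \<psi>"
  then obtain g where "cube_map q r g" "\<forall>a\<in>cube q. \<psi> a = g a"
    unfolding in_square_def by blast
  then show "\<exists>s. length s = r \<and> count_list s None = q \<and> (\<forall>a\<in>cube q. \<psi> a = fill s a)"
    using cube_map_imp_fill by metis
next
  assume "\<exists>s. length s = r \<and> count_list s None = q \<and> (\<forall>a\<in>cube q. \<psi> a = fill s a)"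
  then show "in_square q r \<psi>"
    unfolding in_square_def using fill_imp_cube_map by metis
qed

section \<open>Non-twisted index lists\<close>

definition restricted_growth :: "nat \<Rightarrow> nat list \<Rightarrow> bool" where
  "restricted_growth n is \<longleftrightarrow> set is = {..<n} \<and>
     (\<forall>i. Suc i < n \<longrightarrow> (\<forall>k<length is. is ! k = Suc i \<longrightarrow> (\<exists>k'<k. is ! k' = i)))"

lemma non_twisted_iff:
  "non_twisted p' q \<phi> \<longleftrightarrow>
     (\<exists>is. length is = q \<and> restricted_growth p' is \<and> (\<forall>a\<in>cube p'. \<phi> a = map ((!) a) is))"
  unfolding non_twisted_def restricted_growth_def
  by (rule ex_cong1) (auto simp: conj_commute)

lemma restricted_growth_snoc_old:
  assumes "restricted_growth n is" "j < n"
  shows "restricted_growth n (is @ [j])"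
  unfolding restricted_growth_def
proof (intro conjI allI impI)
  show "set (is @ [j]) = {..<n}" using assms by (auto simp: restricted_growth_def)
next
  fix i k assume i: "Suc i < n" and k: "k < length (is @ [j])" "(is @ [j]) ! k = Suc i"
  show "\<exists>k'<k. (is @ [j]) ! k' = i"
  proof (cases "k < length is")
    case True
    then show ?thesis
      using assms(1) i k by (fastforce simp: restricted_growth_def nth_append)
  next
    case False
    then have "k = length is" using k(1) by simp
    moreover have "i \<in> set is" using assms(1) i by (simp add: restricted_growth_def)
    ultimately show ?thesis by (auto simp: in_set_conv_nth nth_append)
  qed
qed

lemma restricted_growth_snoc_new:
  assumes "restricted_growth n is"
  shows "restricted_growth (Suc n) (is @ [n])"
  unfolding restricted_growth_def
proof (intro conjI allI impI)
  show "set (is @ [n]) = {..<Suc n}" using assms by (auto simp: restricted_growth_def)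
next
  fix i k assume i: "Suc i < Suc n" and k: "k < length (is @ [n])" "(is @ [n]) ! k = Suc i"
  show "\<exists>k'<k. (is @ [n]) ! k' = i"
  proof (cases "k < length is")
    case True
    then have "is ! k = Suc i" "Suc i < n"
      using k(2) assms by (auto simp: nth_append restricted_growth_def dest: nth_mem)
    then show ?thesis
      using assms True by (fastforce simp: restricted_growth_def nth_append)
  next
    case False
    then have "k = length is" using k(1) by simp
    moreover have "i \<in> set is" using assms i by (simp add: restricted_growth_def)
    ultimately show ?thesis by (auto simp: in_set_conv_nth nth_append)
  qed
qed

lemma restricted_growth_factorization:
  "\<exists>n G is. restricted_growth n is \<and> inj_on G {..<n} \<and> map G is = vs"
proof (induction vs rule: rev_induct)
  case Nil
  show ?case by (rule exI[of _ 0]) (simp add: restricted_growth_def)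
next
  case (snoc v vs)
  then obtain n G "is" where rg: "restricted_growth n is" "inj_on G {..<n}" "map G is = vs"
    by blast
  show ?case
  proof (cases "v \<in> G ` {..<n}")
    case True
    then obtain j where "j < n" "v = G j" by blast
    then show ?thesis using restricted_growth_snoc_old[OF rg(1)] rg(2,3) by fastforce
  next
    case False
    have "set is = {..<n}" using rg(1) by (simp add: restricted_growth_def)
    then have "map (G(n := v)) is = vs" using rg(3) by (auto intro: map_cong)
    moreover have "inj_on (G(n := v)) {..<Suc n}"
      using rg(2) False by (auto simp: lessThan_Suc inj_on_def)
    ultimately show ?thesis using restricted_growth_snoc_new[OF rg(1)] by fastforce
  qed
qed

lemma restricted_growth_prefix:
  assumes "restricted_growth n is" "k \<le> length is"
  shows "set (take k is) = {..<card (set (take k is))}"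
  using assms(2)
proof (induction k)
  case 0
  then show ?case by simp
next
  case (Suc k)
  have k: "k < length is" using Suc.prems by simp
  have take: "set (take (Suc k) is) = insert (is ! k) (set (take k is))"
    using k by (simp add: take_Suc_conv_app_nth)
  define m where "m = card (set (take k is))"
  have IH: "set (take k is) = {..<m}" using Suc by (simp add: m_def)
  show ?case
  proof (cases "is ! k < m")
    case True
    then show ?thesis using take IH by (simp add: insert_absorb)
  next
    case False
    have "is ! k = m"
    proof (rule ccontr)
      assume "is ! k \<noteq> m"
      then obtain i where i: "is ! k = Suc i" "m \<le> i" using False by (cases "is ! k") auto
      moreover have "Suc i < n" using i(1) k assms(1) nth_mem by (fastforce simp: restricted_growth_def)
      ultimately obtain k' where "k' < k" "is ! k' = i"
        using assms(1) k unfolding restricted_growth_def by blast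
      then have "i \<in> set (take k is)" using k by (auto simp: in_set_conv_nth)
      then show False using IH i by auto
    qed
    then show ?thesis using take IH by (simp add: lessThan_Suc)
  qed
qed

lemma restricted_growth_first_occurrence:
  assumes "restricted_growth n is" "k < length is" "is ! k \<notin> set (take k is)"
  shows "is ! k = card (set (take k is))"
proof -
  define c where "c = card (set (take k is))"
  have prefix: "set (take k is) = {..<c}"
    using restricted_growth_prefix[OF assms(1)] assms(2) by (simp add: c_def)
  have "set (take (Suc k) is) = insert (is ! k) {..<c}"
    using assms(2) prefix by (simp add: take_Suc_conv_app_nth)
  moreover have "set (take (Suc k) is) = {..<card (set (take (Suc k) is))}"
    using restricted_growth_prefix[OF assms(1)] assms(2) by simp
  ultimately have "insert (is ! k) {..<c} = {..<Suc c}"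
    using assms(3) prefix by simp
  then show ?thesis using assms(3) prefix c_def
    by (metis insertI1 lessThan_iff less_Suc_eq)
qed

lemma restricted_growth_eqI:
  assumes rg: "restricted_growth n1 is1" "restricted_growth n2 is2"
    and len: "length is1 = length is2"
    and kernel: "\<And>k k'. k < length is1 \<Longrightarrow> k' < length is1 \<Longrightarrow>
      is1 ! k = is1 ! k' \<longleftrightarrow> is2 ! k = is2 ! k'"
  shows "is1 = is2"
proof -
  have "take k is1 = take k is2" if "k \<le> length is1" for k
    using that
  proof (induction k)
    case 0
    then show ?case by simp
  next
    case (Suc k)
    have k: "k < length is1" "k < length is2" using Suc.prems len by simp_all
    have IH: "take k is1 = take k is2" using Suc by simp
    have "is1 ! k = is2 ! k"
    proof (cases "is1 ! k \<in> set (take k is1)")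
      case True
      then obtain k' where k': "k' < k" "is1 ! k' = is1 ! k" using k by (auto simp: in_set_conv_nth)
      then have "is2 ! k' = is2 ! k" using kernel k by simp
      moreover have "is1 ! k' = is2 ! k'" using IH k' k by (metis nth_take)
      ultimately show ?thesis using k' by simp
    next
      case False
      have "is2 ! k \<notin> set (take k is2)"
      proof
        assume "is2 ! k \<in> set (take k is2)"
        then obtain k' where "k' < k" "is2 ! k' = is2 ! k" using k by (auto simp: in_set_conv_nth)
        then have "is1 ! k' = is1 ! k" using kernel k by simp
        then show False using False \<open>k' < k\<close> k by (auto simp: in_set_conv_nth)
      qed
      then show ?thesis
        using restricted_growth_first_occurrence[OF rg(1) k(1) False]
          restricted_growth_first_occurrence[OF rg(2) k(2)] IH by simp
    qed
    then show ?case using IH k by (simp add: take_Suc_conv_app_nth)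
  qed
  then show ?thesis using len by (metis order_refl take_all)
qed

lemma restricted_growth_unique:
  assumes rg: "restricted_growth n1 is1" "restricted_growth n2 is2"
    and inj: "inj_on G1 {..<n1}" "inj_on G2 {..<n2}"
    and eq: "map G1 is1 = map G2 is2"
  shows "is1 = is2"
proof (rule restricted_growth_eqI[OF rg])
  show len: "length is1 = length is2" using eq by (metis length_map)
  have mem: "is1 ! k \<in> {..<n1}" "is2 ! k \<in> {..<n2}" if "k < length is1" for k
    using rg that len nth_mem unfolding restricted_growth_def by (metis, metis)
  fix k k' assume kk: "k < length is1" "k' < length is1"
  have "is1 ! k = is1 ! k' \<longleftrightarrow> G1 (is1 ! k) = G1 (is1 ! k')"
    using inj(1) mem(1) kk by (auto simp: inj_on_eq_iff)
  also have "\<dots> \<longleftrightarrow> G2 (is2 ! k) = G2 (is2 ! k')"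
    using eq kk len by (metis nth_map)
  also have "\<dots> \<longleftrightarrow> is2 ! k = is2 ! k'"
    using inj(2) mem(2) kk by (auto simp: inj_on_eq_iff)
  finally show "is1 ! k = is1 ! k' \<longleftrightarrow> is2 ! k = is2 ! k'" .
qed

section \<open>Existence and uniqueness of the decomposition\<close>

definition nonconstant_on :: "'a set \<Rightarrow> ('a \<Rightarrow> 'b) \<Rightarrow> bool" where
  "nonconstant_on A f \<longleftrightarrow> (\<exists>a\<in>A. \<exists>b\<in>A. f a \<noteq> f b)"

text \<open>Coordinate functions are restricted to the cube, so that two of them are equal exactly
  when they agree on \<open>[p]\<close>.\<close>

definition coordinates :: "nat \<Rightarrow> nat \<Rightarrow> (bool list \<Rightarrow> bool list) \<Rightarrow> (bool list \<Rightarrow> bool) list" where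
  "coordinates p r x = map (\<lambda>k. \<lambda>a\<in>cube p. x a ! k) [0..<r]"

lemma map_eval_coordinates:
  "a \<in> cube p \<Longrightarrow> x a \<in> cube r \<Longrightarrow> map (\<lambda>f. f a) (coordinates p r x) = x a"
  by (auto simp: coordinates_def cube_def intro: nth_equalityI)

lemma extensional_coordinates: "f \<in> set (coordinates p r x) \<Longrightarrow> f \<in> extensional (cube p)"
  by (auto simp: coordinates_def)

lemma extensional_list_eqI:
  assumes "length fs = length gs" "\<forall>f\<in>set fs \<union> set gs. f \<in> extensional A"
    and "\<forall>a\<in>A. map (\<lambda>f. f a) fs = map (\<lambda>f. f a) gs"
  shows "fs = gs"
proof (rule nth_equalityI)
  fix k assume k: "k < length fs"
  have "(fs ! k) a = (gs ! k) a" if "a \<in> A" for a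
    using assms(3) that k assms(1) by (metis nth_map)
  then show "fs ! k = gs ! k"
    using assms(1,2) k by (intro extensionalityI[of _ A]) auto
qed (use assms(1) in simp)

lemma count_None_map_option: "count_list (map (map_option h) s) None = count_list s None"
  by (induction s) auto

lemma fill_constant_coordinates:
  assumes "a \<in> A" "z \<in> A"
  shows "fill (map (\<lambda>f. if nonconstant_on A f then None else Some (f z)) fs)
           (map (\<lambda>f. f a) (filter (nonconstant_on A) fs)) = map (\<lambda>f. f a) fs"
proof (induction fs)
  case (Cons f fs)
  have "\<not> nonconstant_on A f \<Longrightarrow> f z = f a" using assms unfolding nonconstant_on_def by blast
  with Cons show ?case by simp
qed simp

lemma monotone_nonconstant_endpoints:
  assumes mono: "\<forall>a\<in>cube p. \<forall>b\<in>cube p. cube_le a b \<longrightarrow> f a \<longrightarrow> f b"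
    and "nonconstant_on (cube p) f"
  shows "\<not> f (replicate p False)" "f (replicate p True)"
proof -
  have bounds: "cube_le (replicate p False) a" "cube_le a (replicate p True)" if "a \<in> cube p" for a
    using that by (auto simp: cube_le_def cube_def)
  have ends: "replicate p False \<in> cube p" "replicate p True \<in> cube p" by (simp_all add: cube_def)
  obtain a b where ab: "a \<in> cube p" "b \<in> cube p" "f a \<noteq> f b"
    using assms(2) unfolding nonconstant_on_def by blast
  show "\<not> f (replicate p False)"
  proof
    assume "f (replicate p False)"
    then have "f a" "f b" using mono bounds ends ab by blast+
    then show False using ab(3) by simp
  qed
  show "f (replicate p True)"
  proof (rule ccontr)
    assume "\<not> f (replicate p True)"
    then have "\<not> f a" "\<not> f b" using mono bounds ends ab by blast+
    then show False using ab(3) by simp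
  qed
qed

lemma strictly_increasing_mono:
  "strictly_increasing p x \<Longrightarrow> a \<in> cube p \<Longrightarrow> b \<in> cube p \<Longrightarrow> cube_le a b \<Longrightarrow>
    cube_le (x a) (x b)"
  unfolding strictly_increasing_def cube_less_def using cube_le_refl by blast

lemma coordinates_mono:
  assumes "strictly_increasing p x" "\<forall>a\<in>cube p. x a \<in> cube r" "f \<in> set (coordinates p r x)"
  shows "\<forall>a\<in>cube p. \<forall>b\<in>cube p. cube_le a b \<longrightarrow> f a \<longrightarrow> f b"
proof (intro ballI impI)
  fix a b assume ab: "a \<in> cube p" "b \<in> cube p" "cube_le a b" "f a"
  obtain k where "k < r" "f = (\<lambda>a\<in>cube p. x a ! k)"
    using assms(3) by (auto simp: coordinates_def)
  moreover have "cube_le (x a) (x b)" using strictly_increasing_mono assms(1) ab by blast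
  ultimately show "f b" using assms(2) ab by (auto simp: cube_le_def cube_def)
qed

lemma strict_endpoint_map_factor:
  assumes nonconst: "\<forall>j<n. nonconstant_on (cube p) (g j)"
    and mono: "\<forall>j<n. \<forall>a\<in>cube p. \<forall>b\<in>cube p. cube_le a b \<longrightarrow> g j a \<longrightarrow> g j b"
    and x: "strictly_increasing p x" "\<forall>a\<in>cube p. x a = h (map (\<lambda>j. g j a) [0..<n])"
  shows "strict_endpoint_map p n (\<lambda>a. map (\<lambda>j. g j a) [0..<n])"
proof
  show "map (\<lambda>j. g j a) [0..<n] \<in> cube n" for a by (simp add: cube_def)
  show "strictly_increasing p (\<lambda>a. map (\<lambda>j. g j a) [0..<n])"
    unfolding strictly_increasing_def
  proof (intro ballI impI)
    fix a b assume ab: "a \<in> cube p" "b \<in> cube p" "cube_less a b"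
    then have "x a \<noteq> x b" using x(1) by (auto simp: strictly_increasing_def cube_less_def)
    moreover have "x a = h (map (\<lambda>j. g j a) [0..<n])" "x b = h (map (\<lambda>j. g j b) [0..<n])"
      using x(2) ab by simp_all
    ultimately have "map (\<lambda>j. g j a) [0..<n] \<noteq> map (\<lambda>j. g j b) [0..<n]" by metis
    moreover have "cube_le (map (\<lambda>j. g j a) [0..<n]) (map (\<lambda>j. g j b) [0..<n])"
      using mono ab by (auto simp: cube_le_def cube_less_def)
    ultimately show "cube_less (map (\<lambda>j. g j a) [0..<n]) (map (\<lambda>j. g j b) [0..<n])"
      by (simp add: cube_less_def)
  qed
  show "map (\<lambda>j. g j (replicate p False)) [0..<n] = replicate n False"
    "map (\<lambda>j. g j (replicate p True)) [0..<n] = replicate n True"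
  proof -
    have "\<not> g j (replicate p False)" "g j (replicate p True)" if "j < n" for j
      using monotone_nonconstant_endpoints[of p "g j"] nonconst mono that by simp_all
    then show "map (\<lambda>j. g j (replicate p False)) [0..<n] = replicate n False"
      "map (\<lambda>j. g j (replicate p True)) [0..<n] = replicate n True"
      by (auto intro: nth_equalityI)
  qed
qed

lemma decomposition_exists:
  assumes x: "\<forall>a\<in>cube p. x a \<in> cube r" "strictly_increasing p x"
  obtains n q \<mu> \<phi> \<psi> where "is_decomposition p r x n q \<mu> \<phi> \<psi>" "strict_endpoint_map p n \<mu>"
proof -
  define z where "z = replicate p False"
  define vs where "vs = filter (nonconstant_on (cube p)) (coordinates p r x)"
  obtain n G "is" where rg: "restricted_growth n is" "inj_on G {..<n}" "map G is = vs"
    using restricted_growth_factorization by blast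
  define s where "s = map (\<lambda>f. if nonconstant_on (cube p) f then None else Some (f z)) (coordinates p r x)"
  define \<mu> where "\<mu> a = map (\<lambda>j. G j a) [0..<n]" for a
  define \<phi> where "\<phi> a = map ((!) a) is" for a :: "bool list"
  have G: "G j \<in> set vs" if "j < n" for j
    using rg that by (auto simp: restricted_growth_def)
  then have G_coord: "G j \<in> set (coordinates p r x)" "nonconstant_on (cube p) (G j)" if "j < n" for j
    using that by (auto simp: vs_def)
  have G_mono: "\<forall>j<n. \<forall>a\<in>cube p. \<forall>b\<in>cube p. cube_le a b \<longrightarrow> G j a \<longrightarrow> G j b"
    using coordinates_mono[OF x(2,1) G_coord(1)] by simp
  have eval: "x a = fill s (\<phi> (\<mu> a))" if "a \<in> cube p" for a
  proof -
    have "\<phi> (\<mu> a) = map (\<lambda>f. f a) vs"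
      using rg by (auto simp: \<phi>_def \<mu>_def restricted_growth_def)
    moreover have "x a = map (\<lambda>f. f a) (coordinates p r x)"
      using map_eval_coordinates[of a p x r] x(1) that by simp
    moreover have "z \<in> cube p" by (simp add: z_def cube_def)
    ultimately show ?thesis
      using fill_constant_coordinates[OF that, of z "coordinates p r x"] by (simp add: s_def vs_def)
  qed
  have "is_decomposition p r x n (length is) \<mu> \<phi> (fill s)"
    unfolding is_decomposition_def
  proof (intro conjI)
    have "G i = G j" if "i < n" "j < n" "\<forall>a\<in>cube p. G i a = G j a" for i j
      using that extensional_coordinates[OF G_coord(1)]
      by (intro extensionalityI[of _ "cube p"]) auto
    then show "distinct_nonconst_coords p n \<mu>"
      unfolding distinct_nonconst_coords_def \<mu>_def
      using G_coord(2) rg(2) by (auto simp: nonconstant_on_def inj_on_def)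
    show "non_twisted n (length is) \<phi>"
      unfolding non_twisted_iff \<phi>_def using rg(1) by blast
    have "count_list s None = length is"
      using rg(3) by (auto simp: s_def vs_def count_None_filter dest: arg_cong[of _ _ length])
    moreover have "length s = r" by (simp add: s_def coordinates_def)
    ultimately show "in_square (length is) r (fill s)"
      unfolding in_square_iff_fill by blast
    show "\<forall>a\<in>cube p. x a = fill s (\<phi> (\<mu> a))" using eval by simp
  qed
  moreover have "strict_endpoint_map p n \<mu>"
    unfolding \<mu>_def using G_coord(2) G_mono x(2) eval
    by (intro strict_endpoint_map_factor[where h = "\<lambda>b. fill s (\<phi> b)"]) (auto simp: \<mu>_def)
  ultimately show ?thesis using that by blast
qed

lemma coordinates_fill:
  assumes x: "\<forall>a\<in>cube p. x a = fill s (map (\<lambda>i. g i a) is)"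
    and s: "length s = r" "count_list s None = length is"
  shows "coordinates p r x =
    fill (map (map_option (\<lambda>b. \<lambda>a\<in>cube p. b)) s) (map (\<lambda>i. \<lambda>a\<in>cube p. g i a) is)"
    (is "_ = fill ?S ?F")
proof (rule extensional_list_eqI[of _ _ "cube p"])
  show "length (coordinates p r x) = length (fill ?S ?F)"
    by (simp add: coordinates_def s(1))
  have cnt: "count_list ?S None = length ?F" using s(2) by (simp add: count_None_map_option)
  have "f \<in> extensional (cube p)" if f: "Some f \<in> set ?S" for f
  proof -
    obtain y where "Some f = map_option (\<lambda>b. \<lambda>a\<in>cube p. b) y" using f by auto
    then show ?thesis by (cases y) auto
  qed
  moreover have "set (fill ?S ?F) \<subseteq> {y. Some y \<in> set ?S} \<union> set ?F"
    using set_fill[OF eq_imp_le[OF cnt]] .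
  ultimately show "\<forall>f\<in>set (coordinates p r x) \<union> set (fill ?S ?F). f \<in> extensional (cube p)"
    using extensional_coordinates by auto
  show "\<forall>a\<in>cube p. map (\<lambda>f. f a) (coordinates p r x) = map (\<lambda>f. f a) (fill ?S ?F)"
  proof
    fix a assume a: "a \<in> cube p"
    have "map (map_option (\<lambda>f. f a)) ?S = s"
      using a by (simp add: option.map_comp comp_def option.map_ident)
    then have "map (\<lambda>f. f a) (fill ?S ?F) = x a"
      using map_fill[of ?S ?F "\<lambda>f. f a"] cnt a x by (simp add: comp_def)
    moreover have "x a \<in> cube r" using x a s(1) by (simp add: cube_def)
    ultimately show "map (\<lambda>f. f a) (coordinates p r x) = map (\<lambda>f. f a) (fill ?S ?F)"
      using map_eval_coordinates a by metis
  qed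
qed

lemma restricted_fill_inject:
  fixes s1 s2 :: "'b option list"
  assumes "fill (map (map_option (\<lambda>b. \<lambda>a\<in>cube p. b)) s1) F1 =
      fill (map (map_option (\<lambda>b. \<lambda>a\<in>cube p. b)) s2) F2"
    and "count_list s1 None = length F1" "count_list s2 None = length F2"
    and "\<forall>f\<in>set F1. nonconstant_on (cube p) f" "\<forall>f\<in>set F2. nonconstant_on (cube p) f"
  shows "s1 = s2 \<and> F1 = F2"
proof -
  let ?const = "\<lambda>b::'b. \<lambda>a\<in>cube p. b"
  have const: "\<not> nonconstant_on (cube p) f" if f: "Some f \<in> set (map (map_option ?const) s)" for f s
  proof -
    obtain y where "Some f = map_option ?const y" using f by auto
    then obtain b where "f = ?const b" by (cases y) auto
    then show ?thesis by (simp add: nonconstant_on_def)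
  qed
  have "map (map_option ?const) s1 = map (map_option ?const) s2 \<and> F1 = F2"
    using assms(2-) const
    by (intro fill_inject[OF assms(1), where P = "nonconstant_on (cube p)"])
      (simp_all add: count_None_map_option)
  moreover have "inj (map_option ?const)"
  proof (rule option.inj_map, rule injI)
    fix b1 b2 :: 'b assume "(\<lambda>a\<in>cube p. b1) = (\<lambda>a\<in>cube p. b2)"
    from fun_cong[OF this, of "replicate p False"] show "b1 = b2" by (simp add: cube_def)
  qed
  ultimately show ?thesis by (simp add: inj_map_eq_map)
qed

lemma decomposition_normal_form:
  assumes "is_decomposition p r x p' q \<mu> \<phi> \<psi>"
  obtains s g "is" where
    "count_list s None = q" "\<forall>a\<in>cube q. \<psi> a = fill s a"
    "restricted_growth p' is" "length is = q" "\<forall>a\<in>cube p'. \<phi> a = map ((!) a) is"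
    "\<forall>a\<in>cube p. \<mu> a = map (\<lambda>i. g i a) [0..<p']"
    "\<forall>i<p'. nonconstant_on (cube p) (g i)"
    "inj_on (\<lambda>i. \<lambda>a\<in>cube p. g i a) {..<p'}"
    "coordinates p r x =
       fill (map (map_option (\<lambda>b. \<lambda>a\<in>cube p. b)) s) (map (\<lambda>i. \<lambda>a\<in>cube p. g i a) is)"
proof -
  obtain g where \<mu>: "\<forall>a\<in>cube p. \<mu> a = map (\<lambda>i. g i a) [0..<p']"
    and nonconst: "\<forall>i<p'. nonconstant_on (cube p) (g i)"
    and distinct: "\<forall>i<p'. \<forall>j<p'. (\<forall>a\<in>cube p. g i a = g j a) \<longrightarrow> i = j"
    using assms unfolding is_decomposition_def distinct_nonconst_coords_def nonconstant_on_def
    by blast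
  obtain "is" where "is": "restricted_growth p' is" "length is = q"
    "\<forall>a\<in>cube p'. \<phi> a = map ((!) a) is"
    using assms unfolding is_decomposition_def non_twisted_iff by blast
  obtain s where s: "length s = r" "count_list s None = q" "\<forall>a\<in>cube q. \<psi> a = fill s a"
    using assms unfolding is_decomposition_def in_square_iff_fill by blast
  have inj: "inj_on (\<lambda>i. \<lambda>a\<in>cube p. g i a) {..<p'}"
  proof (rule inj_onI)
    fix i j assume ij: "i \<in> {..<p'}" "j \<in> {..<p'}" "(\<lambda>a\<in>cube p. g i a) = (\<lambda>a\<in>cube p. g j a)"
    then have "\<forall>a\<in>cube p. g i a = g j a" by (metis restrict_apply')
    then show "i = j" using distinct ij by blast
  qed
  have x: "\<forall>a\<in>cube p. x a = fill s (map (\<lambda>i. g i a) is)"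
  proof
    fix a assume a: "a \<in> cube p"
    have "\<mu> a \<in> cube p'" using \<mu> a by (simp add: cube_def)
    then have "\<phi> (\<mu> a) = map (\<lambda>i. g i a) is"
      using "is"(1,3) \<mu> a by (auto simp: restricted_growth_def)
    moreover have "map (\<lambda>i. g i a) is \<in> cube q" using "is"(2) by (simp add: cube_def)
    moreover have "x a = \<psi> (\<phi> (\<mu> a))" using assms a by (simp add: is_decomposition_def)
    ultimately show "x a = fill s (map (\<lambda>i. g i a) is)" using s(3) by simp
  qed
  have "coordinates p r x =
      fill (map (map_option (\<lambda>b. \<lambda>a\<in>cube p. b)) s) (map (\<lambda>i. \<lambda>a\<in>cube p. g i a) is)"
    using coordinates_fill[OF x] s(1,2) "is"(2) by simp
  then show ?thesis using that s(2,3) "is" \<mu> nonconst inj by blast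
qed

lemma decomposition_unique:
  assumes "is_decomposition p r x p1 q1 \<mu>1 \<phi>1 \<psi>1" "is_decomposition p r x p2 q2 \<mu>2 \<phi>2 \<psi>2"
  shows "p1 = p2 \<and> q1 = q2 \<and> (\<forall>a\<in>cube p. \<mu>1 a = \<mu>2 a) \<and> (\<forall>a\<in>cube p1. \<phi>1 a = \<phi>2 a) \<and>
    (\<forall>a\<in>cube q1. \<psi>1 a = \<psi>2 a)"
proof -
  let ?const = "\<lambda>b::bool. \<lambda>a\<in>cube p. b" and ?G = "\<lambda>g i. \<lambda>a\<in>cube p. g i a"
  obtain s1 g1 is1 where d1: "count_list s1 None = q1" "\<forall>a\<in>cube q1. \<psi>1 a = fill s1 a"
    "restricted_growth p1 is1" "length is1 = q1" "\<forall>a\<in>cube p1. \<phi>1 a = map ((!) a) is1"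
    "\<forall>a\<in>cube p. \<mu>1 a = map (\<lambda>i. g1 i a) [0..<p1]" "\<forall>i<p1. nonconstant_on (cube p) (g1 i)"
    "inj_on (?G g1) {..<p1}" "coordinates p r x = fill (map (map_option ?const) s1) (map (?G g1) is1)"
    by (rule decomposition_normal_form[OF assms(1)])
  obtain s2 g2 is2 where d2: "count_list s2 None = q2" "\<forall>a\<in>cube q2. \<psi>2 a = fill s2 a"
    "restricted_growth p2 is2" "length is2 = q2" "\<forall>a\<in>cube p2. \<phi>2 a = map ((!) a) is2"
    "\<forall>a\<in>cube p. \<mu>2 a = map (\<lambda>i. g2 i a) [0..<p2]" "\<forall>i<p2. nonconstant_on (cube p) (g2 i)"
    "inj_on (?G g2) {..<p2}" "coordinates p r x = fill (map (map_option ?const) s2) (map (?G g2) is2)"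
    by (rule decomposition_normal_form[OF assms(2)])
  have nonconst: "\<forall>f\<in>set (map (?G g) is). nonconstant_on (cube p) f"
    if "restricted_growth n is" "\<forall>i<n. nonconstant_on (cube p) (g i)" for n "is" g
    using that by (auto simp: restricted_growth_def nonconstant_on_def)
  have "s1 = s2" and G: "map (?G g1) is1 = map (?G g2) is2"
    using restricted_fill_inject[OF d1(9)[symmetric, THEN trans, OF d2(9)]]
      d1(1,4) d2(1,4) nonconst[OF d1(3,7)] nonconst[OF d2(3,7)] by simp_all
  moreover have "is": "is1 = is2" using restricted_growth_unique[OF d1(3) d2(3) d1(8) d2(8) G] .
  moreover have "{..<p1} = {..<p2}" using d1(3) d2(3) "is" by (simp add: restricted_growth_def)
  then have p: "p1 = p2" by (metis card_lessThan)
  moreover have "g1 j a = g2 j a" if "j < p1" "a \<in> cube p" for j a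
  proof -
    have "j \<in> set is1" using d1(3) that(1) by (simp add: restricted_growth_def)
    then have "?G g1 j = ?G g2 j" using G "is" by (simp add: map_eq_conv)
    from fun_cong[OF this, of a] that(2) show ?thesis by simp
  qed
  then have "\<forall>a\<in>cube p. \<mu>1 a = \<mu>2 a" using d1(6) d2(6) p by simp
  ultimately show ?thesis using d1(1,2,4,5) d2(1,2,4,5) by simp
qed

theorem proposition8p4:
  fixes p r :: nat and x :: "bool list \<Rightarrow> bool list"
  assumes "\<forall>a\<in>cube p. x a \<in> cube r"
    and "strictly_increasing p x"
  shows "\<exists>p' q \<mu> \<phi> \<psi>.
           is_decomposition p r x p' q \<mu> \<phi> \<psi> \<and>
           (\<forall>p'' q' \<mu>' \<phi>' \<psi>'. is_decomposition p r x p'' q' \<mu>' \<phi>' \<psi>' \<longrightarrow>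
              p'' = p' \<and> q' = q \<and> (\<forall>a\<in>cube p. \<mu>' a = \<mu> a) \<and>
              (\<forall>a\<in>cube p'. \<phi>' a = \<phi> a) \<and> (\<forall>a\<in>cube q. \<psi>' a = \<psi> a)) \<and>
           p \<le> p' \<and> strictly_increasing p \<mu> \<and>
           (adjacency_preserving p \<mu> \<longleftrightarrow> p = p')"
proof -
  obtain n q \<mu> \<phi> \<psi> where dec: "is_decomposition p r x n q \<mu> \<phi> \<psi>"
    and \<mu>: "strict_endpoint_map p n \<mu>"
    using decomposition_exists[OF assms] .
  have "p'' = n \<and> q' = q \<and> (\<forall>a\<in>cube p. \<mu>' a = \<mu> a) \<and> (\<forall>a\<in>cube n. \<phi>' a = \<phi> a) \<and>
      (\<forall>a\<in>cube q. \<psi>' a = \<psi> a)"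
    if "is_decomposition p r x p'' q' \<mu>' \<phi>' \<psi>'" for p'' q' \<mu>' \<phi>' \<psi>'
    using decomposition_unique[OF that dec] by simp
  then show ?thesis
    using dec strict_endpoint_map.dim_le[OF \<mu>] strict_endpoint_map.strict[OF \<mu>]
      strict_endpoint_map.adjacency_preserving_iff[OF \<mu>]
    by blast
qed

end
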